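(* The action of $O_d(\mathbb C)$ on $U_d(\mathbb C)\subset V$ is free.
   Context: Fix $d\ge2$. $V=\mathbb C^d\oplus\mathfrak{so}(d,\mathbb C)$, elements $(v,M)$ with $v=(c_1,\dots,c_d)^\top$, $M$ complex skew-symmetric, $M_{ij}=c_{ij}=-M_{ji}$ for $i<j$; $O_d(\mathbb C)=\{A\in\mathbb C^{d\times d}:AA^\top=I\}$ acts by $A\cdot(v,M)=(Av,AMA^\top)$. $L^{(1)}=\{c_1=\dots=c_{d-1}=0\}$, and for $2\le i\le d-1$, $L^{(i)}=\{(v,M)\in L^{(i-1)}:c_{k(d-i+2)}=0,\ 1\le k\le d-i\}$. Let $f_1=c_1^2+\dots+c_d^2$; for $2\le i\le d-1$ let $f_i$ be the $O_d(\mathbb C)$-invariant rational function on $V$ with $f_i|_{L^{(i-1)}}=c_{1(d-i+2)}^2+\dots+c_{(d-i+1)(d-i+2)}^2$; let $f_d$ be the invariant rational function with $f_d|_{L^{(d-1)}}=c_{12}^2$ (these exist and are uniquely determined). $U_d(\mathbb C)$ is the set of points in the domain of every $f_k$ with $\prod_kf_k\neq0$. An action is free if all stabilizers are trivial. *)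

theory Defs
  imports Complex_Main
begin

text \<open>Points of V = C^d (+) so(d,C). A point is a pair (v, M) with
  v :: nat => complex (coordinates c_1..c_d, indices 1..d) and
  M :: nat => nat => complex (entries M i j, indices 1..d), M skew-symmetric.\<close>

type_synonym pt = "(nat \<Rightarrow> complex) \<times> (nat \<Rightarrow> nat \<Rightarrow> complex)"

definition Vsp :: "nat \<Rightarrow> pt set" where
  "Vsp d = {(v, M). (\<forall>i. i \<notin> {1..d} \<longrightarrow> v i = 0)
                  \<and> (\<forall>i j. M i j = - M j i)
                  \<and> (\<forall>i j. (i \<notin> {1..d} \<or> j \<notin> {1..d}) \<longrightarrow> M i j = 0)}"

definition Od :: "nat \<Rightarrow> (nat \<Rightarrow> nat \<Rightarrow> complex) set" where
  "Od d = {A. (\<forall>i j. (i \<notin> {1..d} \<or> j \<notin> {1..d}) \<longrightarrow> A i j = 0)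
            \<and> (\<forall>i\<in>{1..d}. \<forall>j\<in>{1..d}.
                 (\<Sum>k=1..d. A i k * A j k) = (if i = j then 1 else 0))}"

definition idm :: "nat \<Rightarrow> nat \<Rightarrow> nat \<Rightarrow> complex" where
  "idm d = (\<lambda>i j. if i = j \<and> i \<in> {1..d} then 1 else 0)"

definition act :: "nat \<Rightarrow> (nat \<Rightarrow> nat \<Rightarrow> complex) \<Rightarrow> pt \<Rightarrow> pt" where
  "act d A x = (\<lambda>i. \<Sum>j=1..d. A i j * fst x j,
                \<lambda>i l. \<Sum>j=1..d. \<Sum>k=1..d. A i j * snd x j k * A l k)"

inductive_set polyfun :: "nat \<Rightarrow> (pt \<Rightarrow> complex) set" for d where
  const: "(\<lambda>x. c) \<in> polyfun d"
| coord_v: "i \<in> {1..d} \<Longrightarrow> (\<lambda>x. fst x i) \<in> polyfun d"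
| coord_M: "1 \<le> i \<Longrightarrow> i < j \<Longrightarrow> j \<le> d \<Longrightarrow> (\<lambda>x. snd x i j) \<in> polyfun d"
| add: "p \<in> polyfun d \<Longrightarrow> q \<in> polyfun d \<Longrightarrow> (\<lambda>x. p x + q x) \<in> polyfun d"
| mult: "p \<in> polyfun d \<Longrightarrow> q \<in> polyfun d \<Longrightarrow> (\<lambda>x. p x * q x) \<in> polyfun d"

text \<open>A rational function on V is represented by a pair (P, Q) of polynomial
  functions with Q not identically zero; two representatives define the same
  rational function iff P Q' = P' Q on V.\<close>
type_synonym ratfn = "(pt \<Rightarrow> complex) \<times> (pt \<Rightarrow> complex)"

definition is_ratfun :: "nat \<Rightarrow> ratfn \<Rightarrow> bool" where
  "is_ratfun d F \<longleftrightarrow> fst F \<in> polyfun d \<and> snd F \<in> polyfun d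
                      \<and> (\<exists>x\<in>Vsp d. snd F x \<noteq> 0)"

definition rat_eq :: "nat \<Rightarrow> ratfn \<Rightarrow> ratfn \<Rightarrow> bool" where
  "rat_eq d F G \<longleftrightarrow> (\<forall>x\<in>Vsp d. fst F x * snd G x = fst G x * snd F x)"

definition rat_dom :: "nat \<Rightarrow> ratfn \<Rightarrow> pt set" where
  "rat_dom d F = {x\<in>Vsp d. \<exists>G. is_ratfun d G \<and> rat_eq d F G \<and> snd G x \<noteq> 0}"

definition rat_val :: "nat \<Rightarrow> ratfn \<Rightarrow> pt \<Rightarrow> complex" where
  "rat_val d F x = (SOME y. \<exists>G. is_ratfun d G \<and> rat_eq d F G \<and> snd G x \<noteq> 0
                                \<and> y = fst G x / snd G x)"

definition O_invariant :: "nat \<Rightarrow> ratfn \<Rightarrow> bool" where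
  "O_invariant d F \<longleftrightarrow>
     (\<forall>A\<in>Od d. rat_eq d (fst F \<circ> act d A, snd F \<circ> act d A) F)"

definition restricts_to :: "nat \<Rightarrow> ratfn \<Rightarrow> pt set \<Rightarrow> (pt \<Rightarrow> complex) \<Rightarrow> bool" where
  "restricts_to d F L g \<longleftrightarrow>
     (\<exists>G. is_ratfun d G \<and> rat_eq d F G \<and> (\<exists>x\<in>L. snd G x \<noteq> 0)
          \<and> (\<forall>x\<in>L. fst G x = g x * snd G x))"

fun Lsub :: "nat \<Rightarrow> nat \<Rightarrow> pt set" where
  "Lsub d 0 = Vsp d"
| "Lsub d (Suc 0) = {x\<in>Vsp d. \<forall>i\<in>{1..d-1}. fst x i = 0}"
| "Lsub d (Suc (Suc n)) =
     {x\<in>Lsub d (Suc n). \<forall>k\<in>{1..d - (n+2)}. snd x k (d - (n+2) + 2) = 0}"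

text \<open>Target restrictions: for 2 <= i <= d, f_i restricted to L^(i-1) is
  c_{1(d-i+2)}^2 + ... + c_{(d-i+1)(d-i+2)}^2 (for i = d this is c_12^2).\<close>
definition gtarget :: "nat \<Rightarrow> nat \<Rightarrow> pt \<Rightarrow> complex" where
  "gtarget d i x = (if i = d then (snd x 1 2)\<^sup>2
                    else (\<Sum>k=1..d-i+1. (snd x k (d-i+2))\<^sup>2))"

definition f1poly :: "nat \<Rightarrow> pt \<Rightarrow> complex" where
  "f1poly d x = (\<Sum>i=1..d. (fst x i)\<^sup>2)"

definition Ud :: "nat \<Rightarrow> (nat \<Rightarrow> ratfn) \<Rightarrow> pt set" where
  "Ud d f = {x\<in>Vsp d. (\<forall>k\<in>{1..d}. x \<in> rat_dom d (f k))
                      \<and> (\<Prod>k=1..d. rat_val d (f k) x) \<noteq> 0}"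

end

theory Submission
  imports Defs "HOL-Computational_Algebra.Polynomial" "Jordan_Normal_Form.Determinant"
begin

text \<open>
  A reflection acting on the first \<open>m\<close> coordinates moves any vector of \<open>\<complex>\<^sup>m\<close> with nonzero
  square norm onto the line of \<open>e\<^sub>m\<close>. Applied first to \<open>v\<close> (square norm \<open>f\<^sub>1\<close>) and then,
  for \<open>m = d - 1, \<dots>, 2\<close>, to the entries above the diagonal of column \<open>m + 1\<close> of \<open>M\<close>
  (square norm \<open>f\<^sub>d\<^sub>-\<^sub>m\<^sub>+\<^sub>1\<close>, by invariance and the prescribed restriction), this moves every
  point of \<open>U\<^sub>d\<close> into a normal form: \<open>v = v\<^sub>d e\<^sub>d\<close> and \<open>M\<close> vanishes above its
  superdiagonal, with \<open>v\<^sub>d\<close> and all superdiagonal entries nonzero (their squares are the values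
  of the \<open>f\<^sub>i\<close>). An orthogonal matrix fixing such a point fixes \<open>e\<^sub>d\<close> and commutes with
  \<open>M\<close>, which forces it to be the identity, column by column from the last one. Stabilisers
  along an orbit are conjugate, so all of them are trivial.
\<close>

type_synonym cmat = "nat \<Rightarrow> nat \<Rightarrow> complex"

definition is_dmat :: "nat \<Rightarrow> cmat \<Rightarrow> bool" where
  "is_dmat d A \<longleftrightarrow> (\<forall>i j. (i \<notin> {1..d} \<or> j \<notin> {1..d}) \<longrightarrow> A i j = 0)"

definition mat_mult :: "nat \<Rightarrow> cmat \<Rightarrow> cmat \<Rightarrow> cmat" where
  "mat_mult d A B = (\<lambda>i j. \<Sum>k=1..d. A i k * B k j)"

definition mat_transp :: "cmat \<Rightarrow> cmat" where
  "mat_transp A = (\<lambda>i j. A j i)"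

definition mat_vec :: "nat \<Rightarrow> cmat \<Rightarrow> (nat \<Rightarrow> complex) \<Rightarrow> nat \<Rightarrow> complex" where
  "mat_vec d A z = (\<lambda>i. \<Sum>j=1..d. A i j * z j)"

lemma sum_idm_left:
  assumes "i \<in> {1..d}" shows "(\<Sum>k=1..d. idm d i k * f k) = f i"
proof -
  have "(\<Sum>k=1..d. idm d i k * f k) = (\<Sum>k=1..d. if k = i then f i else 0)"
    by (rule sum.cong) (auto simp: idm_def)
  then show ?thesis
    using assms by simp
qed

lemma sum_idm_right:
  assumes "j \<in> {1..d}" shows "(\<Sum>k=1..d. f k * idm d k j) = f j"
proof -
  have "(\<Sum>k=1..d. f k * idm d k j) = (\<Sum>k=1..d. if k = j then f j else 0)"
    by (rule sum.cong) (auto simp: idm_def)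
  then show ?thesis
    using assms by simp
qed

lemma mat_mult_assoc: "mat_mult d (mat_mult d A B) C = mat_mult d A (mat_mult d B C)"
proof (intro ext)
  fix i j
  have "mat_mult d (mat_mult d A B) C i j = (\<Sum>k=1..d. \<Sum>n=1..d. A i n * B n k * C k j)"
    unfolding mat_mult_def by (simp add: sum_distrib_right)
  also have "\<dots> = (\<Sum>n=1..d. \<Sum>k=1..d. A i n * B n k * C k j)"
    by (rule sum.swap)
  also have "\<dots> = mat_mult d A (mat_mult d B C) i j"
    unfolding mat_mult_def by (simp add: sum_distrib_left mult.assoc)
  finally show "mat_mult d (mat_mult d A B) C i j = mat_mult d A (mat_mult d B C) i j" .
qed

lemma mat_mult_idm_left:
  assumes "is_dmat d A" shows "mat_mult d (idm d) A = A"
proof (intro ext)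
  fix i j
  show "mat_mult d (idm d) A i j = A i j"
  proof (cases "i \<in> {1..d}")
    case True
    then show ?thesis
      unfolding mat_mult_def by (rule sum_idm_left)
  next
    case False
    then show ?thesis
      using assms unfolding mat_mult_def idm_def is_dmat_def by (auto intro!: sum.neutral)
  qed
qed

lemma mat_mult_idm_right:
  assumes "is_dmat d A" shows "mat_mult d A (idm d) = A"
proof (intro ext)
  fix i j
  show "mat_mult d A (idm d) i j = A i j"
  proof (cases "j \<in> {1..d}")
    case True
    then show ?thesis
      unfolding mat_mult_def by (rule sum_idm_right)
  next
    case False
    then show ?thesis
      using assms unfolding mat_mult_def idm_def is_dmat_def by (auto intro!: sum.neutral)
  qed
qed

lemma mat_transp_mult: "mat_transp (mat_mult d A B) = mat_mult d (mat_transp B) (mat_transp A)"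
  unfolding mat_transp_def mat_mult_def by (simp add: mult.commute)

lemma mat_transp_transp [simp]: "mat_transp (mat_transp A) = A"
  unfolding mat_transp_def by simp

lemma mat_transp_idm [simp]: "mat_transp (idm d) = idm d"
  unfolding mat_transp_def idm_def by (auto intro!: ext)

lemma is_dmat_idm: "is_dmat d (idm d)"
  unfolding is_dmat_def idm_def by simp

lemma is_dmat_transp: "is_dmat d A \<Longrightarrow> is_dmat d (mat_transp A)"
  unfolding is_dmat_def mat_transp_def by auto

lemma is_dmat_mult: "is_dmat d A \<Longrightarrow> is_dmat d B \<Longrightarrow> is_dmat d (mat_mult d A B)"
  unfolding is_dmat_def mat_mult_def by (metis (no_types, lifting) mult_eq_0_iff sum.neutral)

lemma mat_vec_mat_mult: "mat_vec d (mat_mult d A B) z = mat_vec d A (mat_vec d B z)"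
proof
  fix i
  have "mat_vec d (mat_mult d A B) z i = (\<Sum>j=1..d. \<Sum>k=1..d. A i k * B k j * z j)"
    unfolding mat_vec_def mat_mult_def by (simp add: sum_distrib_right)
  also have "\<dots> = (\<Sum>k=1..d. \<Sum>j=1..d. A i k * B k j * z j)"
    by (rule sum.swap)
  also have "\<dots> = mat_vec d A (mat_vec d B z) i"
    unfolding mat_vec_def by (simp add: sum_distrib_left mult.assoc)
  finally show "mat_vec d (mat_mult d A B) z i = mat_vec d A (mat_vec d B z) i" .
qed

lemma mat_vec_idm:
  assumes "\<forall>i. i \<notin> {1..d} \<longrightarrow> z i = 0" shows "mat_vec d (idm d) z = z"
proof
  fix i
  show "mat_vec d (idm d) z i = z i"
  proof (cases "i \<in> {1..d}")
    case True
    then show ?thesis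
      unfolding mat_vec_def by (rule sum_idm_left)
  next
    case False
    then show ?thesis
      using assms unfolding mat_vec_def idm_def by (auto intro!: sum.neutral)
  qed
qed

lemma Od_is_dmat: "A \<in> Od d \<Longrightarrow> is_dmat d A"
  unfolding Od_def is_dmat_def by simp

lemma Od_mult_transp:
  assumes "A \<in> Od d" shows "mat_mult d A (mat_transp A) = idm d"
proof (intro ext)
  fix i j
  show "mat_mult d A (mat_transp A) i j = idm d i j"
  proof (cases "i \<in> {1..d} \<and> j \<in> {1..d}")
    case True
    then show ?thesis
      using assms unfolding Od_def mat_mult_def mat_transp_def idm_def by auto
  next
    case False
    then have "A i k * A j k = 0" for k
      using Od_is_dmat[OF assms] unfolding is_dmat_def by auto
    then have "mat_mult d A (mat_transp A) i j = 0"
      unfolding mat_mult_def mat_transp_def by (intro sum.neutral) blast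
    moreover have "idm d i j = 0"
      using False unfolding idm_def by auto
    ultimately show ?thesis
      by simp
  qed
qed

lemma OdI:
  assumes "is_dmat d A" "mat_mult d A (mat_transp A) = idm d" shows "A \<in> Od d"
  unfolding Od_def mem_Collect_eq
proof (intro conjI ballI)
  show "\<forall>i j. (i \<notin> {1..d} \<or> j \<notin> {1..d}) \<longrightarrow> A i j = 0"
    using assms(1) unfolding is_dmat_def .
  fix i j assume "i \<in> {1..d}" "j \<in> {1..d}"
  then show "(\<Sum>k=1..d. A i k * A j k) = (if i = j then 1 else 0)"
    using fun_cong[OF fun_cong[OF assms(2)], of i j] unfolding mat_mult_def mat_transp_def idm_def
    by simp
qed

definition to_mat :: "nat \<Rightarrow> cmat \<Rightarrow> complex mat" where
  "to_mat d A = mat d d (\<lambda>(i, j). A (Suc i) (Suc j))"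

lemma to_mat_mult: "to_mat d (mat_mult d A B) = to_mat d A * to_mat d B"
  unfolding to_mat_def mat_mult_def
  by (rule eq_matI) (auto simp: scalar_prod_def sum.atLeast1_atMost_eq intro!: sum.cong)

lemma to_mat_transp: "to_mat d (mat_transp A) = transpose_mat (to_mat d A)"
  unfolding to_mat_def mat_transp_def by (rule eq_matI) auto

lemma to_mat_idm: "to_mat d (idm d) = 1\<^sub>m d"
  unfolding to_mat_def idm_def by (rule eq_matI) auto

lemma to_mat_inject:
  assumes "is_dmat d A" "is_dmat d B" "to_mat d A = to_mat d B"
  shows "A = B"
proof (intro ext)
  fix i j
  show "A i j = B i j"
  proof (cases "i \<in> {1..d} \<and> j \<in> {1..d}")
    case True
    then obtain a b where "i = Suc a" "j = Suc b"
      by (cases i; cases j) auto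
    moreover have "a < d" "b < d"
      using True calculation by auto
    ultimately show ?thesis
      using arg_cong[OF assms(3), of "\<lambda>M. M $$ (a, b)"] unfolding to_mat_def by simp
  qed (use assms in \<open>unfold is_dmat_def, auto\<close>)
qed

lemma Od_transp_mult:
  assumes "A \<in> Od d" shows "mat_mult d (mat_transp A) A = idm d"
proof (rule to_mat_inject)
  have "to_mat d A * transpose_mat (to_mat d A) = 1\<^sub>m d"
    using arg_cong[OF Od_mult_transp[OF assms], of "to_mat d"]
    by (simp add: to_mat_mult to_mat_transp to_mat_idm)
  then have "transpose_mat (to_mat d A) * to_mat d A = 1\<^sub>m d"
    by (rule mat_mult_left_right_inverse[rotated 2]) (auto simp: to_mat_def)
  then show "to_mat d (mat_mult d (mat_transp A) A) = to_mat d (idm d)"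
    by (simp add: to_mat_mult to_mat_transp to_mat_idm)
qed (use assms in \<open>auto simp: is_dmat_idm is_dmat_mult is_dmat_transp Od_is_dmat\<close>)

lemma Od_transp: "A \<in> Od d \<Longrightarrow> mat_transp A \<in> Od d"
  by (rule OdI) (simp_all add: Od_transp_mult is_dmat_transp Od_is_dmat)

lemma Od_mult:
  assumes "A \<in> Od d" "B \<in> Od d" shows "mat_mult d A B \<in> Od d"
proof -
  have "mat_mult d (mat_mult d A B) (mat_transp (mat_mult d A B))
      = mat_mult d A (mat_mult d (mat_mult d B (mat_transp B)) (mat_transp A))"
    by (simp add: mat_transp_mult mat_mult_assoc)
  also have "\<dots> = idm d"
    using assms by (simp add: Od_mult_transp mat_mult_idm_left is_dmat_transp Od_is_dmat)
  finally show ?thesis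
    using assms by (intro OdI) (simp_all add: is_dmat_mult Od_is_dmat)
qed

lemma Vsp_iff:
  "x \<in> Vsp d \<longleftrightarrow>
     (\<forall>i. i \<notin> {1..d} \<longrightarrow> fst x i = 0) \<and> (\<forall>i j. snd x i j = - snd x j i) \<and> is_dmat d (snd x)"
  by (cases x) (simp add: Vsp_def is_dmat_def)

lemma Vsp_fst_eq_0: "x \<in> Vsp d \<Longrightarrow> i \<notin> {1..d} \<Longrightarrow> fst x i = 0"
  unfolding Vsp_iff by blast

lemma Vsp_skew: "x \<in> Vsp d \<Longrightarrow> snd x i j = - snd x j i"
  unfolding Vsp_iff by blast

lemma Vsp_is_dmat: "x \<in> Vsp d \<Longrightarrow> is_dmat d (snd x)"
  unfolding Vsp_iff by blast

lemma Vsp_snd_eq_0: "x \<in> Vsp d \<Longrightarrow> i \<notin> {1..d} \<or> j \<notin> {1..d} \<Longrightarrow> snd x i j = 0"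
  using Vsp_is_dmat unfolding is_dmat_def by blast

lemma act_eq:
  "act d A x = (mat_vec d A (fst x), mat_mult d (mat_mult d A (snd x)) (mat_transp A))"
proof -
  have "(\<Sum>j=1..d. \<Sum>k=1..d. A i j * snd x j k * A l k)
      = (\<Sum>k=1..d. (\<Sum>j=1..d. A i j * snd x j k) * A l k)" for i l
    by (subst sum.swap) (simp add: sum_distrib_right)
  then show ?thesis
    unfolding act_def mat_vec_def mat_mult_def mat_transp_def by simp
qed

lemma act_mult: "act d B (act d A x) = act d (mat_mult d B A) x"
  by (simp add: act_eq mat_vec_mat_mult mat_transp_mult mat_mult_assoc)

lemma act_idm: "x \<in> Vsp d \<Longrightarrow> act d (idm d) x = x"
  by (simp add: act_eq mat_vec_idm mat_mult_idm_left mat_mult_idm_right Vsp_is_dmat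
      Vsp_fst_eq_0 prod_eq_iff)

lemma act_transp_act: "A \<in> Od d \<Longrightarrow> x \<in> Vsp d \<Longrightarrow> act d (mat_transp A) (act d A x) = x"
  by (simp add: act_mult Od_transp_mult act_idm)

lemma act_Vsp:
  assumes A: "is_dmat d A" and x: "x \<in> Vsp d"
  shows "act d A x \<in> Vsp d"
proof -
  have skew: "(\<Sum>j=1..d. \<Sum>k=1..d. A i j * snd x j k * A l k)
      = - (\<Sum>j=1..d. \<Sum>k=1..d. A l j * snd x j k * A i k)" for i l
  proof -
    have "(\<Sum>j=1..d. \<Sum>k=1..d. A l j * snd x j k * A i k)
        = (\<Sum>j=1..d. \<Sum>k=1..d. - (A i k * snd x k j * A l j))"
      using Vsp_skew[OF x]
      by (intro sum.cong refl) (metis mult.commute mult_minus_left mult_minus_right mult.assoc)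
    also have "\<dots> = - (\<Sum>k=1..d. \<Sum>j=1..d. A i k * snd x k j * A l j)"
      by (subst sum.swap) (simp add: sum_negf)
    finally show ?thesis
      by simp
  qed
  have "is_dmat d (snd (act d A x))"
    using A x by (simp add: act_eq is_dmat_mult is_dmat_transp Vsp_is_dmat)
  moreover have "fst (act d A x) i = 0" if "i \<notin> {1..d}" for i
    using A that unfolding act_def is_dmat_def by simp
  moreover have "snd (act d A x) i l = - snd (act d A x) l i" for i l
    unfolding act_def snd_conv by (rule skew)
  ultimately show ?thesis
    unfolding Vsp_iff by blast
qed

lemma sum_squares_mat_vec:
  assumes "A \<in> Od d"
  shows "(\<Sum>i=1..d. (mat_vec d A z i)\<^sup>2) = (\<Sum>i=1..d. (z i)\<^sup>2)"
proof -
  have "(\<Sum>i=1..d. (mat_vec d A z i)\<^sup>2) = (\<Sum>i=1..d. \<Sum>j=1..d. \<Sum>k=1..d. A i j * A i k * (z j * z k))"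
    unfolding mat_vec_def power2_eq_square by (simp add: sum_distrib_left sum_distrib_right mult_ac)
  also have "\<dots> = (\<Sum>j=1..d. \<Sum>i=1..d. \<Sum>k=1..d. A i j * A i k * (z j * z k))"
    by (rule sum.swap)
  also have "\<dots> = (\<Sum>j=1..d. \<Sum>k=1..d. \<Sum>i=1..d. A i j * A i k * (z j * z k))"
    by (rule sum.cong[OF refl], rule sum.swap)
  also have "\<dots> = (\<Sum>j=1..d. \<Sum>k=1..d. (\<Sum>i=1..d. A i j * A i k) * (z j * z k))"
    by (simp add: sum_distrib_right)
  also have "\<dots> = (\<Sum>j=1..d. \<Sum>k=1..d. idm d j k * (z j * z k))"
    using fun_cong[OF fun_cong[OF Od_transp_mult[OF assms]]]
    unfolding mat_mult_def mat_transp_def by simp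
  also have "\<dots> = (\<Sum>j=1..d. z j * z j)"
    by (rule sum.cong[OF refl], rule sum_idm_left)
  finally show ?thesis
    by (simp add: power2_eq_square)
qed

lemma f1poly_act: "A \<in> Od d \<Longrightarrow> f1poly d (act d A x) = f1poly d x"
  unfolding f1poly_def act_eq fst_conv by (rule sum_squares_mat_vec)

lemma polyfun_sum:
  "finite S \<Longrightarrow> (\<And>k. k \<in> S \<Longrightarrow> p k \<in> polyfun d) \<Longrightarrow> (\<lambda>x. \<Sum>k\<in>S. p k x) \<in> polyfun d"
proof (induction S rule: finite_induct)
  case empty
  show ?case
    using polyfun.const[of 0 d] by simp
next
  case (insert a S)
  have "(\<lambda>x. p a x + (\<Sum>k\<in>S. p k x)) \<in> polyfun d"
    using insert by (intro polyfun.add) auto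
  then show ?case
    using insert by simp
qed

lemma polyfun_diff:
  assumes "p \<in> polyfun d" "q \<in> polyfun d" shows "(\<lambda>x. p x - q x) \<in> polyfun d"
proof -
  have "(\<lambda>x. p x + (-1) * q x) \<in> polyfun d"
    by (intro polyfun.add polyfun.mult polyfun.const assms)
  then show ?thesis
    by simp
qed

lemma polyfun_square: "p \<in> polyfun d \<Longrightarrow> (\<lambda>x. (p x)\<^sup>2) \<in> polyfun d"
  using polyfun.mult[of p d p] by (simp add: power2_eq_square)

lemma f1poly_polyfun: "f1poly d \<in> polyfun d"
  unfolding f1poly_def[abs_def] by (intro polyfun_sum polyfun_square polyfun.coord_v) auto

text \<open>\<open>polyfun\<close> only has the coordinates \<open>c\<^sub>i\<^sub>j\<close> with \<open>i < j\<close>; this is the entry \<open>(i, j)\<close>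
  of a skew-symmetric matrix in terms of them.\<close>
definition skew_entry :: "nat \<Rightarrow> nat \<Rightarrow> pt \<Rightarrow> complex" where
  "skew_entry i j x = (if i < j then snd x i j else if j < i then - snd x j i else 0)"

lemma skew_entry_polyfun:
  assumes "i \<in> {1..d}" "j \<in> {1..d}" shows "skew_entry i j \<in> polyfun d"
proof -
  consider "i < j" | "j < i" | "i = j"
    by linarith
  then show ?thesis
  proof cases
    case 1
    then show ?thesis
      using assms polyfun.coord_M[of i j d] unfolding skew_entry_def by simp
  next
    case 2
    have "(\<lambda>x. (-1) * snd x j i) \<in> polyfun d"
      using assms 2 by (intro polyfun.mult polyfun.const polyfun.coord_M) auto
    then show ?thesis
      using 2 unfolding skew_entry_def by simp
  next
    case 3
    then show ?thesis
      using polyfun.const[of 0 d] unfolding skew_entry_def by simp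
  qed
qed

lemma skew_entry_Vsp: "x \<in> Vsp d \<Longrightarrow> skew_entry i j x = snd x i j"
  using Vsp_skew[of x d i j] Vsp_skew[of x d i i] unfolding skew_entry_def by auto

lemma act_fst_polyfun: "(\<lambda>y. fst (act d A y) i) \<in> polyfun d"
  unfolding act_def fst_conv
  by (intro polyfun_sum polyfun.mult polyfun.const polyfun.coord_v) auto

lemma act_snd_polyfun: "\<exists>q\<in>polyfun d. \<forall>y\<in>Vsp d. q y = snd (act d A y) i j"
proof
  show "(\<lambda>y. \<Sum>a=1..d. \<Sum>b=1..d. A i a * skew_entry a b y * A j b) \<in> polyfun d"
    using skew_entry_polyfun
    by (intro polyfun_sum polyfun.mult polyfun.const) (auto simp del: atLeastAtMost_iff)
  show "\<forall>y\<in>Vsp d. (\<Sum>a=1..d. \<Sum>b=1..d. A i a * skew_entry a b y * A j b) = snd (act d A y) i j"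
    unfolding act_def snd_conv by (simp add: skew_entry_Vsp)
qed

lemma polyfun_act: "p \<in> polyfun d \<Longrightarrow> \<exists>q\<in>polyfun d. \<forall>y\<in>Vsp d. q y = p (act d A y)"
proof (induction rule: polyfun.induct)
  case (const c)
  show ?case
    by (rule bexI[of _ "\<lambda>y. c"]) (simp_all add: polyfun.const)
next
  case (coord_v i)
  show ?case
    by (rule bexI[of _ "\<lambda>y. fst (act d A y) i"]) (simp_all add: act_fst_polyfun)
next
  case (coord_M i j)
  show ?case
    by (rule act_snd_polyfun)
next
  case (add p q)
  then obtain P Q where "P \<in> polyfun d" "\<forall>y\<in>Vsp d. P y = p (act d A y)"
    and "Q \<in> polyfun d" "\<forall>y\<in>Vsp d. Q y = q (act d A y)"
    by blast
  then show ?case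
    by (intro bexI[of _ "\<lambda>y. P y + Q y"] polyfun.add) auto
next
  case (mult p q)
  then obtain P Q where "P \<in> polyfun d" "\<forall>y\<in>Vsp d. P y = p (act d A y)"
    and "Q \<in> polyfun d" "\<forall>y\<in>Vsp d. Q y = q (act d A y)"
    by blast
  then show ?case
    by (intro bexI[of _ "\<lambda>y. P y * Q y"] polyfun.mult) auto
qed

definition affine_comb :: "pt \<Rightarrow> pt \<Rightarrow> complex \<Rightarrow> pt" where
  "affine_comb a b t =
     (\<lambda>i. fst a i + t * (fst b i - fst a i), \<lambda>i j. snd a i j + t * (snd b i j - snd a i j))"

definition affine_closed :: "pt set \<Rightarrow> bool" where
  "affine_closed S \<longleftrightarrow> (\<forall>a\<in>S. \<forall>b\<in>S. \<forall>t. affine_comb a b t \<in> S)"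

lemma affine_comb_0: "affine_comb a b 0 = a"
  unfolding affine_comb_def by simp

lemma affine_comb_1: "affine_comb a b 1 = b"
  unfolding affine_comb_def by simp

lemma polyfun_affine_comb: "p \<in> polyfun d \<Longrightarrow> \<exists>q. \<forall>t. p (affine_comb a b t) = poly q t"
proof (induction rule: polyfun.induct)
  case (const c)
  show ?case
    by (rule exI[of _ "[:c:]"]) simp
next
  case (coord_v i)
  show ?case
    by (rule exI[of _ "[:fst a i, fst b i - fst a i:]"]) (simp add: affine_comb_def)
next
  case (coord_M i j)
  show ?case
    by (rule exI[of _ "[:snd a i j, snd b i j - snd a i j:]"]) (simp add: affine_comb_def)
next
  case (add p q)
  then obtain P Q where "\<forall>t. p (affine_comb a b t) = poly P t" "\<forall>t. q (affine_comb a b t) = poly Q t"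
    by blast
  then show ?case
    by (intro exI[of _ "P + Q"]) simp
next
  case (mult p q)
  then obtain P Q where "\<forall>t. p (affine_comb a b t) = poly P t" "\<forall>t. q (affine_comb a b t) = poly Q t"
    by blast
  then show ?case
    by (intro exI[of _ "P * Q"]) simp
qed

text \<open>Restricted to the line through \<open>y\<close> and \<open>z\<close>, \<open>p\<close> and \<open>q\<close> are univariate polynomials.\<close>
lemma polyfun_mult_eq_0:
  assumes p: "p \<in> polyfun d" and q: "q \<in> polyfun d" and S: "affine_closed S"
    and pq: "\<forall>x\<in>S. p x * q x = 0" and y: "y \<in> S" "q y \<noteq> 0" and z: "z \<in> S"
  shows "p z = 0"
proof -
  obtain P where P: "\<forall>t. p (affine_comb y z t) = poly P t"
    using polyfun_affine_comb[OF p] by blast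
  obtain Q where Q: "\<forall>t. q (affine_comb y z t) = poly Q t"
    using polyfun_affine_comb[OF q] by blast
  have "poly (P * Q) t = 0" for t
    using S y z pq P Q unfolding affine_closed_def by (metis poly_mult)
  then have "P * Q = 0"
    using poly_all_0_iff_0 by blast
  moreover have "poly Q 0 \<noteq> 0"
    using Q y(2) by (metis affine_comb_0)
  ultimately have "P = 0"
    by auto
  then show ?thesis
    using P by (metis affine_comb_1 poly_0)
qed

lemma affine_closed_Vsp: "affine_closed (Vsp d)"
  unfolding affine_closed_def
proof (intro ballI allI)
  fix a b t assume a: "a \<in> Vsp d" and b: "b \<in> Vsp d"
  have "snd (affine_comb a b t) i j = - snd (affine_comb a b t) j i" for i j
    using Vsp_skew[OF a, of i j] Vsp_skew[OF b, of i j] unfolding affine_comb_def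
    by (simp add: algebra_simps)
  moreover have "is_dmat d (snd (affine_comb a b t))"
    using Vsp_is_dmat[OF a] Vsp_is_dmat[OF b] unfolding is_dmat_def affine_comb_def by simp
  moreover have "fst (affine_comb a b t) i = 0" if "i \<notin> {1..d}" for i
    using Vsp_fst_eq_0[OF a that] Vsp_fst_eq_0[OF b that] unfolding affine_comb_def by simp
  ultimately show "affine_comb a b t \<in> Vsp d"
    unfolding Vsp_iff by blast
qed

section \<open>Rational functions\<close>

lemma rat_eq_sym: "rat_eq d F G \<Longrightarrow> rat_eq d G F"
  unfolding rat_eq_def by metis

lemma rat_eq_trans:
  assumes F: "is_ratfun d F" and G: "is_ratfun d G" and H: "is_ratfun d H"
    and FG: "rat_eq d F G" and GH: "rat_eq d G H"
  shows "rat_eq d F H"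
proof -
  obtain y where y: "y \<in> Vsp d" "snd G y \<noteq> 0"
    using G unfolding is_ratfun_def by blast
  have zero: "\<forall>x\<in>Vsp d. (fst F x * snd H x - fst H x * snd F x) * snd G x = 0"
  proof
    fix x assume x: "x \<in> Vsp d"
    have FGx: "fst F x * snd G x = fst G x * snd F x" and GHx: "fst G x * snd H x = fst H x * snd G x"
      using FG GH x unfolding rat_eq_def by auto
    have "(fst F x * snd H x - fst H x * snd F x) * snd G x
        = (fst F x * snd G x) * snd H x - (fst H x * snd G x) * snd F x"
      by (simp add: algebra_simps)
    also have "\<dots> = (fst G x * snd F x) * snd H x - (fst G x * snd H x) * snd F x"
      by (simp only: FGx GHx)
    also have "\<dots> = 0"
      by (simp add: algebra_simps)
    finally show "(fst F x * snd H x - fst H x * snd F x) * snd G x = 0" .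
  qed
  have poly: "(\<lambda>x. fst F x * snd H x - fst H x * snd F x) \<in> polyfun d"
    using F H unfolding is_ratfun_def by (intro polyfun_diff polyfun.mult) auto
  have "snd G \<in> polyfun d"
    using G unfolding is_ratfun_def by blast
  then have "fst F x * snd H x - fst H x * snd F x = 0" if "x \<in> Vsp d" for x
    using polyfun_mult_eq_0[OF poly _ affine_closed_Vsp zero y that] by blast
  then show ?thesis
    unfolding rat_eq_def by simp
qed

lemma rat_val_eq:
  assumes F: "is_ratfun d F" and G: "is_ratfun d G" and FG: "rat_eq d F G"
    and x: "x \<in> Vsp d" and nz: "snd G x \<noteq> 0"
  shows "rat_val d F x = fst G x / snd G x"
proof -
  let ?P = "\<lambda>v. \<exists>G. is_ratfun d G \<and> rat_eq d F G \<and> snd G x \<noteq> 0 \<and> v = fst G x / snd G x"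
  have "?P (rat_val d F x)"
    unfolding rat_val_def by (rule someI[of ?P]) (use G FG nz in blast)
  then obtain G' where G': "is_ratfun d G'" "rat_eq d F G'" "snd G' x \<noteq> 0"
    and val: "rat_val d F x = fst G' x / snd G' x"
    by blast
  have "rat_eq d G' G"
    using rat_eq_trans[OF G'(1) F G rat_eq_sym[OF G'(2)] FG] .
  then have "fst G' x * snd G x = fst G x * snd G' x"
    using x unfolding rat_eq_def by blast
  then show ?thesis
    using G'(3) nz val by (simp add: frac_eq_eq)
qed

lemma rat_val_polynomial:
  assumes "is_ratfun d F" "p \<in> polyfun d" "rat_eq d F (p, \<lambda>x. 1)" "x \<in> Vsp d"
  shows "rat_val d F x = p x"
proof -
  have "is_ratfun d (p, \<lambda>x. 1)"
    unfolding is_ratfun_def fst_conv snd_conv using assms(2,4) polyfun.const one_neq_zero by blast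
  then show ?thesis
    using rat_val_eq[OF assms(1) _ assms(3,4)] by simp
qed

lemma ratfun_comp_act:
  assumes F: "is_ratfun d F" and A: "A \<in> Od d"
  obtains G where "is_ratfun d G"
    and "\<forall>y\<in>Vsp d. fst G y = fst F (act d A y) \<and> snd G y = snd F (act d A y)"
proof -
  obtain P where P: "P \<in> polyfun d" "\<forall>y\<in>Vsp d. P y = fst F (act d A y)"
    using polyfun_act[of "fst F" d A] F unfolding is_ratfun_def by blast
  obtain Q where Q: "Q \<in> polyfun d" "\<forall>y\<in>Vsp d. Q y = snd F (act d A y)"
    using polyfun_act[of "snd F" d A] F unfolding is_ratfun_def by blast
  obtain z where z: "z \<in> Vsp d" "snd F z \<noteq> 0"
    using F unfolding is_ratfun_def by blast
  define y where "y = act d (mat_transp A) z"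
  have "y \<in> Vsp d"
    unfolding y_def using z(1) A by (simp add: act_Vsp Od_transp Od_is_dmat)
  moreover have "act d A y = z"
    using act_transp_act[OF Od_transp[OF A] z(1)] by (simp add: y_def)
  ultimately have "is_ratfun d (P, Q)"
    unfolding is_ratfun_def using P(1) Q z(2) by auto
  with P Q show ?thesis
    using that by auto
qed

lemma O_invariant_act:
  assumes F: "is_ratfun d F" and inv: "O_invariant d F" and x: "x \<in> rat_dom d F" and A: "A \<in> Od d"
  shows "act d A x \<in> rat_dom d F \<and> rat_val d F (act d A x) = rat_val d F x"
proof -
  obtain G where G: "is_ratfun d G" "rat_eq d F G" "snd G x \<noteq> 0" and xV: "x \<in> Vsp d"
    using x unfolding rat_dom_def by blast
  define B where "B = mat_transp A"
  have B: "B \<in> Od d"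
    using Od_transp[OF A] by (simp add: B_def)
  have AxV: "act d A x \<in> Vsp d"
    by (rule act_Vsp[OF Od_is_dmat[OF A] xV])
  have BAx: "act d B (act d A x) = x"
    using act_transp_act[OF A xV] by (simp add: B_def)
  obtain FB where FB: "is_ratfun d FB"
    "\<forall>y\<in>Vsp d. fst FB y = fst F (act d B y) \<and> snd FB y = snd F (act d B y)"
    using ratfun_comp_act[OF F B] by blast
  obtain GB where GB: "is_ratfun d GB"
    "\<forall>y\<in>Vsp d. fst GB y = fst G (act d B y) \<and> snd GB y = snd G (act d B y)"
    using ratfun_comp_act[OF G(1) B] by blast
  have "rat_eq d FB F"
    using inv B FB(2) unfolding O_invariant_def rat_eq_def by auto
  moreover have "rat_eq d FB GB"
    using G(2) FB(2) GB(2) act_Vsp[OF Od_is_dmat[OF B]] unfolding rat_eq_def by auto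
  ultimately have F_GB: "rat_eq d F GB"
    using rat_eq_trans[OF F FB(1) GB(1)] rat_eq_sym by blast
  have GB_Ax: "fst GB (act d A x) = fst G x" "snd GB (act d A x) = snd G x"
    using GB(2) AxV BAx by auto
  have "snd GB (act d A x) \<noteq> 0"
    using GB_Ax G(3) by simp
  then have "act d A x \<in> rat_dom d F"
    unfolding rat_dom_def using AxV GB(1) F_GB by blast
  moreover have "rat_val d F (act d A x) = rat_val d F x"
    using rat_val_eq[OF F GB(1) F_GB AxV] rat_val_eq[OF F G(1,2) xV G(3)] GB_Ax G(3) by simp
  ultimately show ?thesis ..
qed

lemma rat_val_restricts_to:
  assumes R: "restricts_to d F L g" and F: "is_ratfun d F" and g: "g \<in> polyfun d"
    and L: "L \<subseteq> Vsp d" "affine_closed L" and x: "x \<in> L" "x \<in> rat_dom d F"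
  shows "rat_val d F x = g x"
proof -
  obtain G y where G: "is_ratfun d G" "rat_eq d F G" and y: "y \<in> L" "snd G y \<noteq> 0"
    and Gg: "\<forall>z\<in>L. fst G z = g z * snd G z"
    using R unfolding restricts_to_def by blast
  obtain H where H: "is_ratfun d H" "rat_eq d F H" "snd H x \<noteq> 0"
    using x(2) unfolding rat_dom_def by blast
  have HG: "rat_eq d H G"
    using rat_eq_trans[OF H(1) F G(1) rat_eq_sym[OF H(2)] G(2)] .
  have zero: "\<forall>z\<in>L. (fst H z - g z * snd H z) * snd G z = 0"
  proof
    fix z assume z: "z \<in> L"
    have "fst H z * snd G z = fst G z * snd H z"
      using HG z L(1) unfolding rat_eq_def by blast
    also have "\<dots> = g z * snd G z * snd H z"
      using Gg z by simp
    finally show "(fst H z - g z * snd H z) * snd G z = 0"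
      by (simp add: algebra_simps)
  qed
  have poly: "(\<lambda>z. fst H z - g z * snd H z) \<in> polyfun d"
    using H(1) g unfolding is_ratfun_def by (intro polyfun_diff polyfun.mult) auto
  have "snd G \<in> polyfun d"
    using G(1) unfolding is_ratfun_def by blast
  then have "fst H x - g x * snd H x = 0"
    using polyfun_mult_eq_0[OF poly _ L(2) zero y x(1)] by blast
  moreover have "rat_val d F x = fst H x / snd H x"
    using rat_val_eq[OF F H(1,2) _ H(3)] x(1) L(1) by blast
  ultimately show ?thesis
    using H(3) by (simp add: field_simps)
qed

lemma restricts_to_orbit_nonzero:
  assumes F: "is_ratfun d F" "O_invariant d F" and R: "restricts_to d F L g"
    and g: "g \<in> polyfun d" and L: "L \<subseteq> Vsp d" "affine_closed L"
    and x: "x \<in> rat_dom d F" "rat_val d F x \<noteq> 0" and C: "C \<in> Od d" "act d C x \<in> L"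
  shows "g (act d C x) \<noteq> 0"
  using O_invariant_act[OF F x(1) C(1)] rat_val_restricts_to[OF R F(1) g L C(2)] x(2) by auto

lemma Lsub_iff:
  "x \<in> Lsub d (Suc n) \<longleftrightarrow>
     x \<in> Vsp d \<and> (\<forall>k<d. fst x k = 0) \<and> (\<forall>k j. d < j + n \<longrightarrow> k + 2 \<le> j \<longrightarrow> snd x k j = 0)"
proof (induction n)
  case 0
  have "fst x k = 0" if "x \<in> Vsp d" "\<forall>i\<in>{1..d-1}. fst x i = 0" "k < d" for k
    using that Vsp_fst_eq_0[OF that(1), of k] by (cases "k = 0") auto
  moreover have "snd x k j = 0" if "x \<in> Vsp d" "d < j" for k j
    using Vsp_snd_eq_0[OF that(1), of k j] that(2) by simp
  ultimately show ?case
    by auto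
next
  case (Suc n)
  let ?old = "\<forall>k j. d < j + n \<longrightarrow> k + 2 \<le> j \<longrightarrow> snd x k j = 0"
  let ?new = "\<forall>k\<in>{1..d - (n + 2)}. snd x k (d - (n + 2) + 2) = 0"
  let ?all = "\<forall>k j. d < j + Suc n \<longrightarrow> k + 2 \<le> j \<longrightarrow> snd x k j = 0"
  have "?old \<and> ?new \<longleftrightarrow> ?all" if x: "x \<in> Vsp d"
  proof
    assume old_new: "?old \<and> ?new"
    show ?all
    proof (intro allI impI)
      fix k j assume j: "d < j + Suc n" "k + 2 \<le> j"
      consider "d < j + n" | "k = 0" | "k \<in> {1..d - (n + 2)}" "j = d - (n + 2) + 2"
        using j by fastforce
      then show "snd x k j = 0"
        by cases (use old_new j Vsp_snd_eq_0[OF x, of 0 j] in auto)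
    qed
  next
    assume all: ?all
    have "snd x k (d - (n + 2) + 2) = 0" if "k \<in> {1..d - (n + 2)}" for k
      using all[rule_format, of "d - (n + 2) + 2" k] that by auto
    then show "?old \<and> ?new"
      using all by auto
  qed
  then show ?case
    using Suc by auto
qed

lemma Lsub_anti:
  assumes "1 \<le> i" "i \<le> j" shows "Lsub d j \<subseteq> Lsub d i"
proof -
  obtain m n where "i = Suc m" "j = Suc n"
    using assms by (cases i; cases j) auto
  with assms show ?thesis
    by (auto simp: Lsub_iff)
qed

lemma Lsub_subset_Vsp: "Lsub d i \<subseteq> Vsp d"
  by (cases i) (auto simp: Lsub_iff)

lemma affine_closed_Lsub: "affine_closed (Lsub d i)"
proof (cases i)
  case 0
  then show ?thesis
    by (simp add: affine_closed_Vsp)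
next
  case (Suc n)
  show ?thesis
    unfolding affine_closed_def Suc
  proof (intro ballI allI)
    fix a b t assume a: "a \<in> Lsub d (Suc n)" and b: "b \<in> Lsub d (Suc n)"
    then have "affine_comb a b t \<in> Vsp d"
      using affine_closed_Vsp unfolding affine_closed_def Lsub_iff by blast
    with a b show "affine_comb a b t \<in> Lsub d (Suc n)"
      unfolding Lsub_iff by (simp add: affine_comb_def)
  qed
qed

lemma Lsub_last_zeros:
  assumes y: "y \<in> Lsub d (d - 1)" and d: "2 \<le> d"
  shows "\<forall>k<d. fst y k = 0" and "\<forall>j k. j < k \<longrightarrow> snd y j (Suc k) = 0"
proof -
  have "Suc (d - 2) = d - 1"
    using d by auto
  then have y': "y \<in> Lsub d (Suc (d - 2))"
    using y by (simp only:)
  then show "\<forall>k<d. fst y k = 0"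
    unfolding Lsub_iff by blast
  show "\<forall>j k. j < k \<longrightarrow> snd y j (Suc k) = 0"
  proof (intro allI impI)
    fix j k :: nat assume "j < k"
    then show "snd y j (Suc k) = 0"
      using y' d Vsp_snd_eq_0[of y d 0 "Suc k"] unfolding Lsub_iff by (cases "j = 0") auto
  qed
qed

lemma f1poly_Lsub:
  assumes "y \<in> Lsub d (Suc n)" "1 \<le> d" shows "f1poly d y = (fst y d)\<^sup>2"
proof -
  have "f1poly d y = (\<Sum>i\<in>{d}. (fst y i)\<^sup>2)"
    unfolding f1poly_def by (rule sum.mono_neutral_right) (use assms in \<open>auto simp: Lsub_iff\<close>)
  then show ?thesis
    by simp
qed

lemma gtarget_polyfun:
  assumes "i \<in> {2..d}" shows "gtarget d i \<in> polyfun d"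
proof (cases "i = d")
  case True
  have "(\<lambda>x. (snd x 1 2)\<^sup>2) \<in> polyfun d"
    using assms by (intro polyfun_square polyfun.coord_M) auto
  then show ?thesis
    using True unfolding gtarget_def[abs_def] by simp
next
  case False
  have "(\<lambda>x. \<Sum>k=1..d-i+1. (snd x k (d-i+2))\<^sup>2) \<in> polyfun d"
    using assms by (intro polyfun_sum polyfun_square polyfun.coord_M) auto
  then show ?thesis
    using False unfolding gtarget_def[abs_def] by simp
qed

lemma gtarget_Lsub:
  assumes y: "y \<in> Lsub d (d - 1)" and m: "m \<in> {1..d-1}"
  shows "gtarget d (d + 1 - m) y = (snd y m (Suc m))\<^sup>2"
proof (cases "m = 1")
  case True
  then show ?thesis
    using m by (simp add: gtarget_def numeral_2_eq_2)
next
  case False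
  have "Suc (d - 2) = d - 1"
    using m by auto
  then have "y \<in> Lsub d (Suc (d - 2))"
    using y by (simp only:)
  then have zero: "snd y k (Suc m) = 0" if "k < m" for k
    using that False m unfolding Lsub_iff by auto
  have i: "d + 1 - m \<noteq> d" "d - (d + 1 - m) + 1 = m" "d - (d + 1 - m) + 2 = Suc m"
    using False m by auto
  have "gtarget d (d + 1 - m) y = (\<Sum>k=1..m. (snd y k (Suc m))\<^sup>2)"
    unfolding gtarget_def if_not_P[OF i(1)] i(2,3) ..
  also have "\<dots> = (\<Sum>k\<in>{m}. (snd y k (Suc m))\<^sup>2)"
    by (rule sum.mono_neutral_right) (use m zero in auto)
  finally show ?thesis
    by simp
qed

section \<open>Householder reflections\<close>

definition acts_on_first :: "nat \<Rightarrow> nat \<Rightarrow> cmat \<Rightarrow> bool" where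
  "acts_on_first d m H \<longleftrightarrow> (\<forall>k a. m < k \<or> m < a \<longrightarrow> H k a = idm d k a)"

lemma acts_on_first_mat_vec_low:
  assumes H: "acts_on_first d m H" and "m \<le> d" "k \<le> m"
  shows "mat_vec d H z k = (\<Sum>a=1..m. H k a * z a)"
  unfolding mat_vec_def
proof (rule sum.mono_neutral_right)
  show "\<forall>a\<in>{1..d} - {1..m}. H k a * z a = 0"
    using H assms(3) unfolding acts_on_first_def idm_def by auto
qed (use assms(2) in auto)

lemma acts_on_first_mat_vec_high:
  assumes H: "acts_on_first d m H" and "m < k" "k \<le> d"
  shows "mat_vec d H z k = z k"
proof -
  have "mat_vec d H z k = (\<Sum>a=1..d. idm d k a * z a)"
    using H assms(2) unfolding mat_vec_def acts_on_first_def by simp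
  also have "\<dots> = z k"
    by (rule sum_idm_left) (use assms in auto)
  finally show ?thesis .
qed

lemma acts_on_first_fixes_tail_vector:
  assumes H: "acts_on_first d m H" "m \<le> d" and z: "\<forall>a\<in>{1..m}. z a = 0" and k: "k \<in> {1..d}"
  shows "mat_vec d H z k = z k"
proof (cases "k \<le> m")
  case True
  have "(\<Sum>a=1..m. H k a * z a) = 0"
    using z by (intro sum.neutral) simp
  then show ?thesis
    using acts_on_first_mat_vec_low[OF H True, of z] True k z by simp
next
  case False
  then show ?thesis
    using acts_on_first_mat_vec_high[OF H(1), of k z] k by simp
qed

lemma acts_on_first_snd_act:
  assumes H: "acts_on_first d m H" and j: "m < j" "j \<le> d"
  shows "snd (act d H y) k j = mat_vec d H (\<lambda>a. snd y a j) k"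
proof -
  have "H j b = idm d b j" for b
    using H j(1) unfolding acts_on_first_def idm_def by auto
  then have col: "(\<Sum>b=1..d. snd y a b * H j b) = snd y a j" for a
    using sum_idm_right[of j d "\<lambda>b. snd y a b"] j by simp
  have "snd (act d H y) k j = (\<Sum>a=1..d. H k a * (\<Sum>b=1..d. snd y a b * H j b))"
    unfolding act_def snd_conv by (simp add: sum_distrib_left mult.assoc)
  then show ?thesis
    unfolding col mat_vec_def .
qed

definition householder :: "nat \<Rightarrow> (nat \<Rightarrow> complex) \<Rightarrow> cmat" where
  "householder d u = (\<lambda>i j. idm d i j - 2 * u i * u j / (\<Sum>k=1..d. (u k)\<^sup>2))"

lemma householder_mat_vec:
  assumes i: "i \<in> {1..d}"
  shows "mat_vec d (householder d u) z i
    = z i - 2 * u i * (\<Sum>k=1..d. u k * z k) / (\<Sum>k=1..d. (u k)\<^sup>2)"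
proof -
  define s where "s = (\<Sum>k=1..d. (u k)\<^sup>2)"
  have "mat_vec d (householder d u) z i = (\<Sum>a=1..d. idm d i a * z a - 2 * u i / s * (u a * z a))"
    unfolding mat_vec_def householder_def s_def by (intro sum.cong refl) (simp add: algebra_simps)
  also have "\<dots> = z i - 2 * u i / s * (\<Sum>a=1..d. u a * z a)"
    by (simp only: sum_subtractf sum_distrib_left sum_idm_left[OF i])
  finally show ?thesis
    by (simp add: s_def)
qed

lemma householder_Od:
  assumes u: "\<forall>i. i \<notin> {1..d} \<longrightarrow> u i = 0" and s: "(\<Sum>k=1..d. (u k)\<^sup>2) \<noteq> 0"
  shows "householder d u \<in> Od d"
  unfolding Od_def mem_Collect_eq
proof (intro conjI allI impI ballI)
  fix i j assume ij: "i \<notin> {1..d} \<or> j \<notin> {1..d}"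
  then have "idm d i j = 0"
    unfolding idm_def by auto
  moreover have "2 * u i * u j / (\<Sum>k=1..d. (u k)\<^sup>2) = 0"
    using ij u by auto
  ultimately show "householder d u i j = 0"
    unfolding householder_def by simp
next
  fix i j assume i: "i \<in> {1..d}" and j: "j \<in> {1..d}"
  let ?H = "householder d u" and ?s = "\<Sum>k=1..d. (u k)\<^sup>2"
  have "(\<Sum>k=1..d. u k * ?H j k) = mat_vec d ?H u j"
    unfolding mat_vec_def by (simp add: mult.commute)
  also have "\<dots> = - u j"
    using householder_mat_vec[OF j, of u u] s by (simp add: power2_eq_square)
  finally have uH: "(\<Sum>k=1..d. u k * ?H j k) = - u j" .
  have "(\<Sum>k=1..d. ?H i k * ?H j k) = mat_vec d ?H (?H j) i"
    unfolding mat_vec_def ..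
  also have "\<dots> = ?H j i + 2 * u i * u j / ?s"
    unfolding householder_mat_vec[OF i] uH by simp
  also have "\<dots> = (if i = j then 1 else 0)"
    using i j unfolding householder_def idm_def by (simp add: mult.commute)
  finally show "(\<Sum>k=1..d. ?H i k * ?H j k) = (if i = j then 1 else 0)" .
qed

lemma householder_acts_on_first:
  "\<forall>i. i \<notin> {1..m} \<longrightarrow> u i = 0 \<Longrightarrow> acts_on_first d m (householder d u)"
  unfolding acts_on_first_def householder_def by auto

lemma exists_sqrt_avoiding:
  assumes "(g :: complex) \<noteq> 0" shows "\<exists>l. l\<^sup>2 = g \<and> l * c \<noteq> g"
proof (cases "csqrt g * c = g")
  case True
  then have "(- csqrt g) * c \<noteq> g"
    using assms by simp
  then show ?thesis
    by (intro exI[of _ "- csqrt g"]) simp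
next
  case False
  then show ?thesis
    by (intro exI[of _ "csqrt g"]) simp
qed

lemma householder_axis_sums:
  fixes w :: "nat \<Rightarrow> complex"
  assumes m: "1 \<le> m" "m \<le> d" and l: "l\<^sup>2 = (\<Sum>k=1..m. (w k)\<^sup>2)"
  defines "u \<equiv> \<lambda>a. if a \<in> {1..m} then w a - (if a = m then l else 0) else 0"
  shows "(\<Sum>a=1..d. u a * (if a \<in> {1..m} then w a else 0)) = l\<^sup>2 - l * w m"
    and "(\<Sum>a=1..d. (u a)\<^sup>2) = 2 * (l\<^sup>2 - l * w m)"
proof -
  have on_m: "(\<Sum>a=1..d. f a) = (\<Sum>a=1..m. f a)" if "\<forall>a. a \<notin> {1..m} \<longrightarrow> f a = 0"
    for f :: "nat \<Rightarrow> complex"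
    by (rule sum.mono_neutral_right) (use m that in auto)
  have "(\<Sum>a=1..m. u a * w a) = (\<Sum>a=1..m. (w a)\<^sup>2 - (if a = m then l * w m else 0))"
    by (rule sum.cong) (auto simp: u_def power2_eq_square algebra_simps)
  then show "(\<Sum>a=1..d. u a * (if a \<in> {1..m} then w a else 0)) = l\<^sup>2 - l * w m"
    using on_m[of "\<lambda>a. u a * (if a \<in> {1..m} then w a else 0)"] m(1) l(1)
    by (simp add: u_def sum_subtractf)
  have "(\<Sum>a=1..m. (u a)\<^sup>2) = (\<Sum>a=1..m. (w a)\<^sup>2 - (if a = m then 2 * l * w m - l\<^sup>2 else 0))"
    by (rule sum.cong) (auto simp: u_def power2_eq_square algebra_simps)
  then show "(\<Sum>a=1..d. (u a)\<^sup>2) = 2 * (l\<^sup>2 - l * w m)"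
    using on_m[of "\<lambda>a. (u a)\<^sup>2"] m(1) l(1) by (simp add: u_def sum_subtractf)
qed

text \<open>With \<open>u = w - l e\<^sub>m\<close> and \<open>l\<^sup>2 = w \<bullet> w\<close> one has \<open>u \<bullet> u = 2 (u \<bullet> w)\<close>, so the
  reflection along \<open>u\<close> sends \<open>w\<close> to \<open>w - u = l e\<^sub>m\<close>; the sign of \<open>l\<close> is chosen so
  that \<open>u \<bullet> w \<noteq> 0\<close>.\<close>
lemma householder_onto_axis:
  fixes w :: "nat \<Rightarrow> complex"
  assumes m: "1 \<le> m" "m \<le> d" and l: "l\<^sup>2 = (\<Sum>k=1..m. (w k)\<^sup>2)" "l * w m \<noteq> l\<^sup>2"
  defines "u \<equiv> \<lambda>a. if a \<in> {1..m} then w a - (if a = m then l else 0) else 0"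
  shows "householder d u \<in> Od d" and "acts_on_first d m (householder d u)"
    and "\<forall>k\<in>{1..m-1}. (\<Sum>a=1..m. householder d u k a * w a) = 0"
proof -
  define w' where "w' a = (if a \<in> {1..m} then w a else 0)" for a
  define p where "p = l\<^sup>2 - l * w m"
  have p: "p \<noteq> 0"
    using l(2) by (simp add: p_def)
  have u_out: "\<forall>a. a \<notin> {1..m} \<longrightarrow> u a = 0"
    by (simp add: u_def)
  have uw: "(\<Sum>a=1..d. u a * w' a) = p"
    unfolding u_def w'_def p_def by (rule householder_axis_sums(1)[OF m l(1)])
  have uu: "(\<Sum>a=1..d. (u a)\<^sup>2) = 2 * p"
    unfolding u_def p_def by (rule householder_axis_sums(2)[OF m l(1)])
  have "\<forall>a. a \<notin> {1..d} \<longrightarrow> u a = 0"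
    using u_out m(2) by auto
  then show "householder d u \<in> Od d"
    by (rule householder_Od) (unfold uu, use p in simp)
  show H: "acts_on_first d m (householder d u)"
    by (rule householder_acts_on_first[OF u_out])
  show "\<forall>k\<in>{1..m-1}. (\<Sum>a=1..m. householder d u k a * w a) = 0"
  proof
    fix k assume k: "k \<in> {1..m-1}"
    then have km: "k < m" "k \<in> {1..d}"
      using m by auto
    then have "(\<Sum>a=1..m. householder d u k a * w a) = mat_vec d (householder d u) w' k"
      using acts_on_first_mat_vec_low[OF H m(2), of k w'] by (simp add: w'_def)
    also have "\<dots> = w' k - 2 * u k * p / (2 * p)"
      using householder_mat_vec[OF km(2), of u w'] unfolding uw uu .
    also have "\<dots> = w k - 2 * w k * p / (2 * p)"
      using k km by (simp add: w'_def u_def)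
    also have "\<dots> = 0"
      using p by simp
    finally show "(\<Sum>a=1..m. householder d u k a * w a) = 0" .
  qed
qed

lemma exists_reflection_onto_axis:
  assumes "1 \<le> m" "m \<le> d" and "(\<Sum>k=1..m. (w k)\<^sup>2) \<noteq> 0"
  obtains H where "H \<in> Od d" "acts_on_first d m H" "\<forall>k\<in>{1..m-1}. (\<Sum>a=1..m. H k a * w a) = 0"
proof -
  obtain l where "l\<^sup>2 = (\<Sum>k=1..m. (w k)\<^sup>2)" "l * w m \<noteq> l\<^sup>2"
    using exists_sqrt_avoiding[OF assms(3), of "w m"] by auto
  then show ?thesis
    using householder_onto_axis[OF assms(1,2)] that by blast
qed

section \<open>A normal form in every orbit\<close>

lemma act_mem_Lsub_Suc:
  assumes y: "y \<in> Lsub d (Suc n)" and m: "Suc n + m = d"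
    and H: "H \<in> Od d" "acts_on_first d m H"
    and col: "\<forall>k\<in>{1..m-1}. (\<Sum>a=1..m. H k a * snd y a (Suc m)) = 0"
  shows "act d H y \<in> Lsub d (Suc (Suc n))"
proof -
  have yV: "y \<in> Vsp d" and v: "\<forall>k<d. fst y k = 0"
    and M: "\<forall>k j. d < j + n \<longrightarrow> k + 2 \<le> j \<longrightarrow> snd y k j = 0"
    using y unfolding Lsub_iff by auto
  have HyV: "act d H y \<in> Vsp d"
    by (rule act_Vsp[OF Od_is_dmat[OF H(1)] yV])
  have "fst (act d H y) k = 0" if "k < d" for k
  proof (cases "k = 0")
    case True
    then show ?thesis
      using Vsp_fst_eq_0[OF HyV] by simp
  next
    case False
    then have "mat_vec d H (fst y) k = fst y k"
      using acts_on_first_fixes_tail_vector[OF H(2), of "fst y" k] m v that by auto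
    then show ?thesis
      using v that by (simp add: act_eq)
  qed
  moreover have "snd (act d H y) k j = 0" if j: "d < j + Suc n" "k + 2 \<le> j" for k j
  proof (cases "k = 0 \<or> d < j")
    case True
    then show ?thesis
      using Vsp_snd_eq_0[OF HyV] by auto
  next
    case False
    then have k: "k \<in> {1..d}" and mj: "m < j" "j \<le> d"
      using j m by auto
    have e: "snd (act d H y) k j = mat_vec d H (\<lambda>a. snd y a j) k"
      by (rule acts_on_first_snd_act[OF H(2) mj])
    show ?thesis
    proof (cases "j = Suc m")
      case True
      then have "m \<le> d" "k \<le> m" "k \<in> {1..m-1}"
        using j k m by auto
      then show ?thesis
        using e acts_on_first_mat_vec_low[OF H(2), of k] col True by auto
    next
      case False
      then have "\<forall>a\<in>{1..m}. snd y a j = 0"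
        using M j mj m by auto
      then have "mat_vec d H (\<lambda>a. snd y a j) k = snd y k j"
        using acts_on_first_fixes_tail_vector[OF H(2) _ _ k] m by auto
      then show ?thesis
        using e M j mj m False by auto
    qed
  qed
  ultimately show ?thesis
    unfolding Lsub_iff using HyV by blast
qed

lemma exists_Od_into_Lsub:
  assumes x: "x \<in> Vsp d" "f1poly d x \<noteq> 0"
    and orbit: "\<forall>C\<in>Od d. \<forall>i\<in>{2..d}. act d C x \<in> Lsub d (i - 1) \<longrightarrow> gtarget d i (act d C x) \<noteq> 0"
    and n: "Suc n < d"
  shows "\<exists>C\<in>Od d. act d C x \<in> Lsub d (Suc n)"
  using n
proof (induction n)
  case 0
  obtain H where H: "H \<in> Od d" "\<forall>k\<in>{1..d-1}. (\<Sum>a=1..d. H k a * fst x a) = 0"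
    using exists_reflection_onto_axis[of d d "fst x"] x(2) 0 by (auto simp: f1poly_def)
  have "act d H x \<in> Lsub d 1"
    using H act_Vsp[OF Od_is_dmat[OF H(1)] x(1)] by (simp add: act_eq mat_vec_def)
  then show ?case
    using H(1) by auto
next
  case (Suc n)
  then obtain C where C: "C \<in> Od d" "act d C x \<in> Lsub d (Suc n)"
    by auto
  define y where "y = act d C x"
  define m where "m = d - Suc n"
  have m: "Suc n + m = d" "2 \<le> m"
    using Suc.prems by (auto simp: m_def)
  have i: "Suc (Suc n) \<noteq> d" "d - Suc (Suc n) + 1 = m" "d - Suc (Suc n) + 2 = Suc m"
    using Suc.prems by (auto simp: m_def)
  have "gtarget d (Suc (Suc n)) y \<noteq> 0"
    using orbit C Suc.prems by (auto simp: y_def)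
  then have nz: "(\<Sum>k=1..m. (snd y k (Suc m))\<^sup>2) \<noteq> 0"
    unfolding gtarget_def if_not_P[OF i(1)] i(2,3) .
  obtain H where H: "H \<in> Od d" "acts_on_first d m H"
    "\<forall>k\<in>{1..m-1}. (\<Sum>a=1..m. H k a * snd y a (Suc m)) = 0"
    by (rule exists_reflection_onto_axis[of m d "\<lambda>k. snd y k (Suc m)"]) (use m nz in auto)
  have "act d (mat_mult d H C) x \<in> Lsub d (Suc (Suc n))"
    using act_mem_Lsub_Suc[OF C(2)[folded y_def] m(1) H] by (simp add: y_def act_mult)
  then show ?case
    using Od_mult[OF H(1) C(1)] by blast
qed

definition normal_form :: "nat \<Rightarrow> pt \<Rightarrow> bool" where
  "normal_form d y \<longleftrightarrow> y \<in> Lsub d (d - 1) \<and> fst y d \<noteq> 0 \<and> (\<forall>m\<in>{1..d-1}. snd y m (Suc m) \<noteq> 0)"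

lemma exists_Od_normal_form:
  assumes d: "2 \<le> d" and x: "x \<in> Vsp d" "f1poly d x \<noteq> 0"
    and orbit: "\<forall>C\<in>Od d. \<forall>i\<in>{2..d}. act d C x \<in> Lsub d (i - 1) \<longrightarrow> gtarget d i (act d C x) \<noteq> 0"
  obtains C where "C \<in> Od d" "normal_form d (act d C x)"
proof -
  have dd: "Suc (d - 2) = d - 1" "Suc (d - 2) < d"
    using d by auto
  obtain C where C: "C \<in> Od d" "act d C x \<in> Lsub d (d - 1)"
    using exists_Od_into_Lsub[OF x orbit dd(2)] unfolding dd(1) by blast
  have "f1poly d (act d C x) = (fst (act d C x) d)\<^sup>2"
    using f1poly_Lsub[of "act d C x" d "d - 2"] C(2) d unfolding dd(1) by simp
  then have "fst (act d C x) d \<noteq> 0"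
    using f1poly_act[OF C(1)] x(2) by simp
  moreover have "snd (act d C x) m (Suc m) \<noteq> 0" if m: "m \<in> {1..d-1}" for m
  proof -
    have i: "d + 1 - m \<in> {2..d}" and "1 \<le> d + 1 - m - 1" "d + 1 - m - 1 \<le> d - 1"
      using m by auto
    then have "act d C x \<in> Lsub d (d + 1 - m - 1)"
      using Lsub_anti C(2) by blast
    then have "gtarget d (d + 1 - m) (act d C x) \<noteq> 0"
      using orbit C(1) i by blast
    then show ?thesis
      using gtarget_Lsub[OF C(2) m] by simp
  qed
  ultimately show ?thesis
    using that C unfolding normal_form_def by blast
qed

section \<open>Stabilisers\<close>

lemma column_eq_idm_of_fixed_vector:
  assumes A: "is_dmat d A" and fixed: "\<forall>i\<in>{1..d}. mat_vec d A u i = u i"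
    and m: "m \<in> {1..d}" "u m \<noteq> 0" and u: "\<forall>j<m. u j = 0"
    and cols: "\<forall>j>m. \<forall>i. A i j = idm d i j"
  shows "A i m = idm d i m"
proof (cases "i \<in> {1..d}")
  case False
  then show ?thesis
    using A unfolding is_dmat_def idm_def by auto
next
  case True
  have "(A i m - idm d i m) * u m = (\<Sum>j\<in>{m}. (A i j - idm d i j) * u j)"
    by simp
  also have "\<dots> = (\<Sum>j=1..d. (A i j - idm d i j) * u j)"
    by (rule sum.mono_neutral_left) (use m u cols in \<open>auto simp: nat_neq_iff\<close>)
  also have "\<dots> = mat_vec d A u i - (\<Sum>j=1..d. idm d i j * u j)"
    unfolding mat_vec_def by (simp only: left_diff_distrib sum_subtractf)
  also have "\<dots> = 0"
    by (simp only: fixed[rule_format, OF True] sum_idm_left[OF True] diff_self)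
  finally show ?thesis
    using m(2) by simp
qed

lemma stabilizer_fixes_snd_column:
  assumes A: "A \<in> Od d" "act d A y = y" and y: "y \<in> Vsp d"
    and j: "j \<in> {1..d}" and col: "\<forall>i. A i j = idm d i j"
  shows "mat_vec d A (\<lambda>a. snd y a j) = (\<lambda>a. snd y a j)"
proof -
  let ?M = "snd y"
  have M: "?M = mat_mult d (mat_mult d A ?M) (mat_transp A)"
    using arg_cong[OF A(2), of snd] by (simp add: act_eq)
  have "mat_mult d ?M A = mat_mult d (mat_mult d (mat_mult d A ?M) (mat_transp A)) A"
    using M by (rule arg_cong[where f = "\<lambda>N. mat_mult d N A"])
  also have "\<dots> = mat_mult d (mat_mult d A ?M) (mat_mult d (mat_transp A) A)"
    by (simp only: mat_mult_assoc)
  also have "\<dots> = mat_mult d A ?M"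
    using A(1) y by (simp add: Od_transp_mult mat_mult_idm_right is_dmat_mult Od_is_dmat Vsp_is_dmat)
  finally have comm: "mat_mult d A ?M = mat_mult d ?M A" ..
  show ?thesis
  proof
    fix i
    have "mat_vec d A (\<lambda>a. ?M a j) i = mat_mult d A ?M i j"
      unfolding mat_vec_def mat_mult_def ..
    also have "\<dots> = mat_mult d ?M A i j"
      by (simp only: comm)
    also have "\<dots> = (\<Sum>a=1..d. ?M i a * idm d a j)"
      unfolding mat_mult_def using col by simp
    also have "\<dots> = ?M i j"
      by (rule sum_idm_right[OF j])
    finally show "mat_vec d A (\<lambda>a. ?M a j) i = ?M i j" .
  qed
qed

text \<open>Column \<open>k + 1\<close> of \<open>M\<close> is \<open>M\<^sub>k\<^sub>,\<^sub>k\<^sub>+\<^sub>1 e\<^sub>k\<close> plus terms in \<open>e\<^sub>j\<close>, \<open>j > k + 1\<close>,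
  and it is fixed by \<open>A\<close> once column \<open>k + 1\<close> of \<open>A\<close> is; the last column is forced by
  \<open>v = v\<^sub>d e\<^sub>d\<close> instead.\<close>
lemma stabilizer_normal_form_column:
  assumes y: "normal_form d y" and d: "2 \<le> d" and A: "A \<in> Od d" "act d A y = y"
    and k: "k \<in> {1..d}" and later: "\<forall>j>k. \<forall>i. A i j = idm d i j"
  shows "A i k = idm d i k"
proof -
  have yL: "y \<in> Lsub d (d - 1)" and v: "fst y d \<noteq> 0" and M: "\<forall>m\<in>{1..d-1}. snd y m (Suc m) \<noteq> 0"
    using y unfolding normal_form_def by auto
  have yV: "y \<in> Vsp d"
    using yL Lsub_subset_Vsp by blast
  have Ad: "is_dmat d A"
    by (rule Od_is_dmat[OF A(1)])
  show ?thesis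
  proof (cases "k = d")
    case True
    have "\<forall>i\<in>{1..d}. mat_vec d A (fst y) i = fst y i"
      using arg_cong[OF A(2), of fst] by (simp add: act_eq)
    then show ?thesis
      using column_eq_idm_of_fixed_vector[OF Ad _ k] True v Lsub_last_zeros(1)[OF yL d] later by auto
  next
    case False
    then have "Suc k \<in> {1..d}"
      using k by auto
    then have "mat_vec d A (\<lambda>a. snd y a (Suc k)) = (\<lambda>a. snd y a (Suc k))"
      using stabilizer_fixes_snd_column[OF A yV] later by auto
    then show ?thesis
      using column_eq_idm_of_fixed_vector[OF Ad _ k, of "\<lambda>a. snd y a (Suc k)"] M k False later
        Lsub_last_zeros(2)[OF yL d] by auto
  qed
qed

lemma stabilizer_normal_form_trivial:
  assumes y: "normal_form d y" and d: "2 \<le> d" and A: "A \<in> Od d" "act d A y = y"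
  shows "A = idm d"
proof -
  have Ad: "is_dmat d A"
    by (rule Od_is_dmat[OF A(1)])
  have cols: "\<forall>j\<ge>1. \<forall>i. A i j = idm d i j"
  proof (rule inc_induct[of 1 "Suc d", where P = "\<lambda>k. \<forall>j\<ge>k. \<forall>i. A i j = idm d i j"])
    show "\<forall>j\<ge>Suc d. \<forall>i. A i j = idm d i j"
      using Ad unfolding is_dmat_def idm_def by auto
  next
    fix k assume k: "1 \<le> k" "k < Suc d" and "\<forall>j\<ge>Suc k. \<forall>i. A i j = idm d i j"
    then have later: "\<forall>j>k. \<forall>i. A i j = idm d i j"
      by auto
    moreover have "\<forall>i. A i k = idm d i k"
      using stabilizer_normal_form_column[OF y d A] k later by auto
    ultimately show "\<forall>j\<ge>k. \<forall>i. A i j = idm d i j"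
      by (metis le_neq_implies_less)
  qed simp
  show ?thesis
  proof (intro ext)
    fix i j
    show "A i j = idm d i j"
      using cols Ad unfolding is_dmat_def idm_def by (cases "j = 0") auto
  qed
qed

lemma stabilizer_trivial_conj:
  assumes C: "C \<in> Od d" and A: "A \<in> Od d" "act d A x = x"
    and trivial: "\<And>B. B \<in> Od d \<Longrightarrow> act d B (act d C x) = act d C x \<Longrightarrow> B = idm d"
  shows "A = idm d"
proof -
  define B where "B = mat_mult d C (mat_mult d A (mat_transp C))"
  have BC: "mat_mult d B C = mat_mult d C A"
    unfolding B_def using C A(1)
    by (simp add: mat_mult_assoc Od_transp_mult mat_mult_idm_right Od_is_dmat)
  have "B \<in> Od d"
    unfolding B_def using C A(1) by (simp add: Od_mult Od_transp)
  moreover have "act d B (act d C x) = act d C x"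
  proof -
    have "act d B (act d C x) = act d (mat_mult d C A) x"
      by (simp only: act_mult BC)
    also have "\<dots> = act d C x"
      by (simp only: act_mult[symmetric] A(2))
    finally show ?thesis .
  qed
  ultimately have "B = idm d"
    by (rule trivial)
  then have "mat_mult d (mat_transp C) (mat_mult d C A) = mat_mult d (mat_transp C) C"
    using BC C by (simp add: mat_mult_idm_left Od_is_dmat)
  then show ?thesis
    using C A(1) by (simp add: mat_mult_assoc[symmetric] Od_transp_mult mat_mult_idm_left Od_is_dmat)
qed

theorem corollary3p9:
  fixes d :: nat and f :: "nat \<Rightarrow> ratfn"
  assumes "d \<ge> 2"
    and "\<forall>k\<in>{1..d}. is_ratfun d (f k)"
    and "rat_eq d (f 1) (f1poly d, \<lambda>x. 1)"
    and "\<forall>i\<in>{2..d}. O_invariant d (f i) \<and> restricts_to d (f i) (Lsub d (i - 1)) (gtarget d i)"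
  shows "\<forall>x\<in>Ud d f. \<forall>A\<in>Od d. act d A x = x \<longrightarrow> A = idm d"
proof (intro ballI impI)
  fix x A assume x: "x \<in> Ud d f" and A: "A \<in> Od d" and fixed: "act d A x = x"
  have xV: "x \<in> Vsp d" and dom: "\<forall>k\<in>{1..d}. x \<in> rat_dom d (f k)"
    and nz: "\<forall>k\<in>{1..d}. rat_val d (f k) x \<noteq> 0"
    using x unfolding Ud_def by auto
  have "f1poly d x \<noteq> 0"
    using rat_val_polynomial[OF _ f1poly_polyfun assms(3) xV] nz assms(1,2) by auto
  moreover have "\<forall>C\<in>Od d. \<forall>i\<in>{2..d}. act d C x \<in> Lsub d (i - 1) \<longrightarrow> gtarget d i (act d C x) \<noteq> 0"
  proof (intro ballI impI)
    fix C i assume "C \<in> Od d" "i \<in> {2..d}" "act d C x \<in> Lsub d (i - 1)"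
    then show "gtarget d i (act d C x) \<noteq> 0"
      by (intro restricts_to_orbit_nonzero[of d "f i" "Lsub d (i - 1)" "gtarget d i" x C])
        (use assms(2,4) dom nz gtarget_polyfun Lsub_subset_Vsp affine_closed_Lsub in auto)
  qed
  ultimately obtain C where C: "C \<in> Od d" "normal_form d (act d C x)"
    using exists_Od_normal_form[OF assms(1) xV] by blast
  show "A = idm d"
    using stabilizer_trivial_conj[OF C(1) A fixed] stabilizer_normal_form_trivial[OF C(2) assms(1)]
    by blast
qed

end
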